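(* Let $\mathbf g:\mathbb{R}^{d_{\mathrm{input}}}\to\mathbb{R}^{M}$ be any $\ell_\infty$-dist net (as defined in the context). Then $\mathbf g$ is 1-Lipschitz with respect to the $\ell_\infty$-norm: for all $\mathbf x_1,\mathbf x_2\in\mathbb{R}^{d_{\mathrm{input}}}$, $$\|\mathbf g(\mathbf x_1)-\mathbf g(\mathbf x_2)\|_\infty\le\|\mathbf x_1-\mathbf x_2\|_\infty .$$
   Context: An $\ell_\infty$-dist neuron with parameters $\theta=\{\mathbf w,b\}$ ($\mathbf w$ a vector, $b\in\mathbb{R}$) computes $u(\mathbf x,\theta)=\|\mathbf x-\mathbf w\|_\infty+b$. An $L$-layer $\ell_\infty$-dist net with hidden widths $d_1,\dots,d_L$ takes $\mathbf x^{(0)}=\mathbf x\in\mathbb{R}^{d_{\mathrm{input}}}$ and computes, for $1\le l\le L$ and $1\le k\le d_l$, $x^{(l)}_k=\|\mathbf x^{(l-1)}-\mathbf w^{(l,k)}\|_\infty+b^{(l,k)}$ with arbitrary real parameters $\mathbf w^{(l,k)}\in\mathbb{R}^{d_{l-1}}$ (where $d_0=d_{\mathrm{input}}$), $b^{(l,k)}\in\mathbb{R}$. With $d_L=M$, the output of the net is $\mathbf g(\mathbf x)=(-x^{(L)}_1,\dots,-x^{(L)}_M)$. *)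

theory Defs
  imports "HOL-Analysis.Analysis"
begin

text \<open>Vectors in R^n are represented as functions nat => real, of which only
the coordinates i < n are relevant.  The l-infinity norm on R^n:\<close>
definition linf_norm :: "nat \<Rightarrow> (nat \<Rightarrow> real) \<Rightarrow> real" where
  "linf_norm n x = Max (insert 0 ((\<lambda>i. \<bar>x i\<bar>) ` {..<n}))"

definition layer_eval :: "nat \<Rightarrow> ((nat \<Rightarrow> real) \<times> real) list \<Rightarrow> (nat \<Rightarrow> real) \<Rightarrow> (nat \<Rightarrow> real)" where
  "layer_eval n ps x = (\<lambda>k. if k < length ps
      then linf_norm n (\<lambda>i. x i - fst (ps ! k) i) + snd (ps ! k) else 0)"

text \<open>A network is a list of layers; the width of layer l is the length of its list.
net_eval d0 layers x gives x^(L) when the input dimension is d0.\<close>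
fun net_eval :: "nat \<Rightarrow> ((nat \<Rightarrow> real) \<times> real) list list \<Rightarrow> (nat \<Rightarrow> real) \<Rightarrow> (nat \<Rightarrow> real)" where
  "net_eval d0 [] x = x"
| "net_eval d0 (ps # rest) x = net_eval (length ps) rest (layer_eval d0 ps x)"

definition net_output :: "nat \<Rightarrow> ((nat \<Rightarrow> real) \<times> real) list list \<Rightarrow> (nat \<Rightarrow> real) \<Rightarrow> (nat \<Rightarrow> real)" where
  "net_output d0 layers x = (\<lambda>k. - net_eval d0 layers x k)"

end

theory Submission
  imports Defs
begin

text \<open>Each neuron \<open>x \<mapsto> \<parallel>x - w\<parallel>\<^sub>\<infinity> + b\<close> is 1-Lipschitz for the \<open>\<ell>\<^sub>\<infinity>\<close>-norm by the reverse
triangle inequality, so every layer is 1-Lipschitz from \<open>\<ell>\<^sub>\<infinity>\<close> to \<open>\<ell>\<^sub>\<infinity>\<close>. Composition preserves the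
Lipschitz constant 1, and negating the output does not change norms.\<close>

lemma linf_norm_le: "0 \<le> c \<Longrightarrow> (\<And>i. i < n \<Longrightarrow> \<bar>x i\<bar> \<le> c) \<Longrightarrow> linf_norm n x \<le> c"
  unfolding linf_norm_def by (subst Max_le_iff) auto

lemma abs_le_linf_norm: "i < n \<Longrightarrow> \<bar>x i\<bar> \<le> linf_norm n x"
  unfolding linf_norm_def by (rule Max_ge) auto

lemma linf_norm_nonneg: "0 \<le> linf_norm n x"
  unfolding linf_norm_def by (rule Max_ge) auto

lemma linf_norm_uminus: "linf_norm n (\<lambda>i. - x i) = linf_norm n x"
  unfolding linf_norm_def by simp

lemma linf_norm_triangle_diff: "linf_norm n a \<le> linf_norm n (\<lambda>i. a i - b i) + linf_norm n b"
proof (rule linf_norm_le)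
  show "0 \<le> linf_norm n (\<lambda>i. a i - b i) + linf_norm n b"
    using linf_norm_nonneg by (simp add: add_nonneg_nonneg)
next
  fix i assume "i < n"
  have "\<bar>a i\<bar> \<le> \<bar>a i - b i\<bar> + \<bar>b i\<bar>" by linarith
  also have "\<dots> \<le> linf_norm n (\<lambda>i. a i - b i) + linf_norm n b"
    using abs_le_linf_norm[OF \<open>i < n\<close>, of "\<lambda>i. a i - b i"] abs_le_linf_norm[OF \<open>i < n\<close>, of b]
    by simp
  finally show "\<bar>a i\<bar> \<le> linf_norm n (\<lambda>i. a i - b i) + linf_norm n b" .
qed

lemma abs_linf_norm_diff_le: "\<bar>linf_norm n a - linf_norm n b\<bar> \<le> linf_norm n (\<lambda>i. a i - b i)"
proof -
  have "linf_norm n (\<lambda>i. b i - a i) = linf_norm n (\<lambda>i. a i - b i)"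
    using linf_norm_uminus[of n "\<lambda>i. a i - b i"] by simp
  then show ?thesis
    using linf_norm_triangle_diff[of n a b] linf_norm_triangle_diff[of n b a] by linarith
qed

lemma layer_eval_lipschitz:
  "linf_norm (length ps) (\<lambda>k. layer_eval n ps x k - layer_eval n ps y k)
     \<le> linf_norm n (\<lambda>i. x i - y i)"
proof (rule linf_norm_le[OF linf_norm_nonneg])
  fix k assume k: "k < length ps"
  have "(\<lambda>i. (x i - fst (ps ! k) i) - (y i - fst (ps ! k) i)) = (\<lambda>i. x i - y i)"
    by auto
  then show "\<bar>layer_eval n ps x k - layer_eval n ps y k\<bar> \<le> linf_norm n (\<lambda>i. x i - y i)"
    using k abs_linf_norm_diff_le[of n "\<lambda>i. x i - fst (ps ! k) i" "\<lambda>i. y i - fst (ps ! k) i"]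
    by (simp add: layer_eval_def)
qed

fun net_out_dim :: "nat \<Rightarrow> ((nat \<Rightarrow> real) \<times> real) list list \<Rightarrow> nat" where
  "net_out_dim d [] = d"
| "net_out_dim d (ps # rest) = net_out_dim (length ps) rest"

lemma net_out_dim_last: "layers \<noteq> [] \<Longrightarrow> net_out_dim d layers = length (last layers)"
  by (induction d layers rule: net_out_dim.induct) (auto simp: neq_Nil_conv)

lemma net_eval_lipschitz:
  "linf_norm (net_out_dim d layers) (\<lambda>k. net_eval d layers x k - net_eval d layers y k)
     \<le> linf_norm d (\<lambda>i. x i - y i)"
proof (induction layers arbitrary: d x y)
  case Nil
  then show ?case by simp
next
  case (Cons ps rest)
  show ?case
    using Cons.IH[of "length ps" "layer_eval d ps x" "layer_eval d ps y"] layer_eval_lipschitz[of ps d x y]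
    by simp
qed

theorem fact1:
  fixes d_input :: nat
    and layers :: "((nat \<Rightarrow> real) \<times> real) list list"
    and x1 x2 :: "nat \<Rightarrow> real"
  assumes "layers \<noteq> []"
    and "\<forall>ps \<in> set layers. ps \<noteq> []"
  shows "linf_norm (length (last layers))
           (\<lambda>k. net_output d_input layers x1 k - net_output d_input layers x2 k)
         \<le> linf_norm d_input (\<lambda>i. x1 i - x2 i)"
proof -
  have "linf_norm (length (last layers))
          (\<lambda>k. net_output d_input layers x1 k - net_output d_input layers x2 k)
      = linf_norm (net_out_dim d_input layers)
          (\<lambda>k. net_eval d_input layers x1 k - net_eval d_input layers x2 k)"
    using linf_norm_uminus[of _ "\<lambda>k. net_eval d_input layers x1 k - net_eval d_input layers x2 k"]
    by (simp add: net_out_dim_last[OF assms(1)] net_output_def)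
  then show ?thesis
    using net_eval_lipschitz by simp
qed

end
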